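(* For every $\mathtt{PDL}$ sequent $\Gamma\Rightarrow\Delta$: if $\Gamma\Rightarrow\Delta$ is provable in $\mathtt{CGPDL}$, then $\Gamma\Rightarrow\Delta$ is valid.
   Context: $\mathtt{PDL}$ formulas/programs over sets $\mathsf{Prop}$, $\mathsf{AtProg}$: $\varphi ::= \bot \mid p \mid (\varphi\to\varphi) \mid [\pi]\varphi$, $\pi ::= \alpha \mid \pi;\pi \mid \pi\cup\pi \mid \pi^{*} \mid \varphi?$. $[\pi]\Gamma=\{[\pi]\varphi:\varphi\in\Gamma\}$. A model $M=(W,(R_\alpha),V)$: $W\neq\emptyset$, $R_\alpha\subseteq W\times W$, $V:W\to\mathcal P(\mathsf{Prop})$; $R_{\pi_0;\pi_1}$ composition, $R_{\pi_0\cup\pi_1}$ union, $R_{\pi^*}$ reflexive–transitive closure of $R_\pi$, $R_{\psi?}=\{(w,w):M,w\models\psi\}$; $\bot$ false, $p$ true at $w$ iff $p\in V(w)$, $\to$ classical, $[\pi]\varphi$ true at $w$ iff $\varphi$ true at all $v$ with $wR_\pi v$. A sequent $\Gamma\Rightarrow\Delta$ is a pair of finite sets of formulas; valid if in every model at every state where all of $\Gamma$ hold some formula of $\Delta$ holds. $\mathtt{CGPDL}$ rules (premises / conclusion): (Ax) / $\Gamma\Rightarrow\Delta$, $\Gamma\cap\Delta\neq\emptyset$; ($\bot$) / $\Gamma,\bot\Rightarrow\Delta$; ($\to$L) $\Gamma\Rightarrow\varphi,\Delta$ and $\Gamma,\psi\Rightarrow\Delta$ / $\Gamma,\varphi\to\psi\Rightarrow\Delta$;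 ($\to$R) $\Gamma,\varphi\Rightarrow\psi,\Delta$ / $\Gamma\Rightarrow\varphi\to\psi,\Delta$; (Wk) $\Gamma\Rightarrow\Delta$ / $\Gamma'\Rightarrow\Delta'$, $\Gamma\subseteq\Gamma'$, $\Delta\subseteq\Delta'$; (Cut) $\Gamma\Rightarrow\varphi,\Delta$ and $\Gamma,\varphi\Rightarrow\Delta$ / $\Gamma\Rightarrow\Delta$; (K) $\Gamma\Rightarrow\varphi$ / $\Gamma',[\pi]\Gamma\Rightarrow[\pi]\varphi,\Delta$; ($[;]$L) $\Gamma,[\pi_0][\pi_1]\varphi\Rightarrow\Delta$ / $\Gamma,[\pi_0;\pi_1]\varphi\Rightarrow\Delta$; ($[;]$R) $\Gamma\Rightarrow[\pi_0][\pi_1]\varphi,\Delta$ / $\Gamma\Rightarrow[\pi_0;\pi_1]\varphi,\Delta$; ($[\cup]$L) $\Gamma,[\pi_0]\varphi,[\pi_1]\varphi\Rightarrow\Delta$ / $\Gamma,[\pi_0\cup\pi_1]\varphi\Rightarrow\Delta$; ($[\cup]$R) $\Gamma\Rightarrow\Delta,[\pi_0]\varphi$ and $\Gamma\Rightarrow\Delta,[\pi_1]\varphi$ / $\Gamma\Rightarrow[\pi_0\cup\pi_1]\varphi,\Delta$; ($[*]$L) $\Gamma,\varphi,[\pi][\pi^*]\varphi\Rightarrow\Delta$ / $\Gamma,[\pi^*]\varphi\Rightarrow\Delta$; ($[?]$L) $\Gamma\Rightarrow\varphi,\Delta$ and $\Gamma,\psi\Rightarrow\Delta$ / $\Gamma,[\varphi?]\psi\Rightarrow\Delta$;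 ($[?]$R) $\Gamma,\varphi\Rightarrow\psi,\Delta$ / $\Gamma\Rightarrow[\varphi?]\psi,\Delta$; (C-s) $\Gamma\Rightarrow\varphi,\Delta$ and $\Gamma\Rightarrow[\pi][\pi^*]\varphi,\Delta$ / $\Gamma\Rightarrow[\pi^*]\varphi,\Delta$. A pre-proof is a finite tree of sequents built of rule instances whose leaves are Ax/$\bot$ instances or buds, with each bud assigned a companion (an inner node labelled with the same sequent); the derivation graph identifies each bud with its companion; a path is a sequence of nodes each a premise of the previous one's rule instance. A trace along a path $(\Gamma_i\Rightarrow\Delta_i)$ is a sequence $\tau_i\in\Delta_i$ such that: at ($\to$R), ($[;]$R), ($[\cup]$R), ($[?]$R), (C-s), either $\tau_{i+1}=\tau_i$ or $\tau_i$ is the principal formula and $\tau_{i+1}$ is its component in the chosen premise ($\psi$ for $\varphi\to\psi$; $[\pi_0][\pi_1]\varphi$ for $[\pi_0;\pi_1]\varphi$; $[\pi_j]\varphi$ for $[\pi_0\cup\pi_1]\varphi$ in the premise containing $[\pi_j]\varphi$; $\psi$ for $[\varphi?]\psi$; $\varphi$ or $[\pi][\pi^*]\varphi$ for $[\pi^*]\varphi$, the latter being a progress point); at (K), $\tau_i$ is the principal formula $[\pi]\varphi$ and $\tau_{i+1}=\varphi$; at all other rules, $\tau_{i+1}=\tau_i$. A $\mathtt{CGPDL}$ proof is a pre-proof in which every infinite path of the derivation graph has a tail followed by a trace with infinitely many progress points; provable means having such a proof with the sequent at the root. *)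

theory Defs
  imports "HOL-Library.Infinite_Set"
begin

datatype ('a, 'p) fm =
    FBot
  | Atom 'p
  | Imp "('a, 'p) fm" "('a, 'p) fm"
  | Box "('a, 'p) prg" "('a, 'p) fm"
and ('a, 'p) prg =
    At 'a
  | Seq "('a, 'p) prg" "('a, 'p) prg"
  | Cup "('a, 'p) prg" "('a, 'p) prg"
  | Star "('a, 'p) prg"
  | Test "('a, 'p) fm"

record ('w, 'a, 'p) model =
  Wd :: "'w set"
  Rl :: "'a \<Rightarrow> ('w \<times> 'w) set"
  Vl :: "'w \<Rightarrow> 'p set"

definition is_model :: "('w, 'a, 'p) model \<Rightarrow> bool" where
  "is_model M \<longleftrightarrow> Wd M \<noteq> {} \<and> (\<forall>\<alpha>. Rl M \<alpha> \<subseteq> Wd M \<times> Wd M)"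

fun sat :: "('w, 'a, 'p) model \<Rightarrow> 'w \<Rightarrow> ('a, 'p) fm \<Rightarrow> bool"
and rel :: "('w, 'a, 'p) model \<Rightarrow> ('a, 'p) prg \<Rightarrow> ('w \<times> 'w) set" where
  "sat M w FBot = False"
| "sat M w (Atom p) = (p \<in> Vl M w)"
| "sat M w (Imp \<phi> \<psi>) = (sat M w \<phi> \<longrightarrow> sat M w \<psi>)"
| "sat M w (Box \<pi> \<phi>) = (\<forall>v. (w, v) \<in> rel M \<pi> \<longrightarrow> sat M v \<phi>)"
| "rel M (At \<alpha>) = Rl M \<alpha>"
| "rel M (Seq \<pi>0 \<pi>1) = rel M \<pi>0 O rel M \<pi>1"
| "rel M (Cup \<pi>0 \<pi>1) = rel M \<pi>0 \<union> rel M \<pi>1"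
| "rel M (Star \<pi>) = Id_on (Wd M) \<union> (rel M \<pi>)\<^sup>+"
| "rel M (Test \<psi>) = {(w, w) | w. w \<in> Wd M \<and> sat M w \<psi>}"

type_synonym ('a, 'p) sequent = "('a, 'p) fm set \<times> ('a, 'p) fm set"

definition valid_in :: "('w, 'a, 'p) model \<Rightarrow> ('a, 'p) fm set \<Rightarrow> ('a, 'p) fm set \<Rightarrow> bool" where
  "valid_in M \<Gamma> \<Delta> \<longleftrightarrow>
     (\<forall>w \<in> Wd M. (\<forall>\<phi> \<in> \<Gamma>. sat M w \<phi>) \<longrightarrow> (\<exists>\<psi> \<in> \<Delta>. sat M w \<psi>))"

datatype ('a, 'p) rule =
    RAx | RBot
  | RImpL "('a, 'p) fm" "('a, 'p) fm"
  | RImpR "('a, 'p) fm" "('a, 'p) fm"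
  | RWk
  | RCut "('a, 'p) fm"
  | RK "('a, 'p) prg" "('a, 'p) fm"
  | RSeqL "('a, 'p) prg" "('a, 'p) prg" "('a, 'p) fm"
  | RSeqR "('a, 'p) prg" "('a, 'p) prg" "('a, 'p) fm"
  | RCupL "('a, 'p) prg" "('a, 'p) prg" "('a, 'p) fm"
  | RCupR "('a, 'p) prg" "('a, 'p) prg" "('a, 'p) fm"
  | RStarL "('a, 'p) prg" "('a, 'p) fm"
  | RTestL "('a, 'p) fm" "('a, 'p) fm"
  | RTestR "('a, 'p) fm" "('a, 'p) fm"
  | RCs "('a, 'p) prg" "('a, 'p) fm"

text \<open>inst r C Ps: C is the conclusion and Ps the (ordered) premises of an instance of r.\<close>
fun inst :: "('a, 'p) rule \<Rightarrow> ('a, 'p) sequent \<Rightarrow> ('a, 'p) sequent list \<Rightarrow> bool" where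
  "inst RAx (\<Gamma>, \<Delta>) Ps \<longleftrightarrow> Ps = [] \<and> \<Gamma> \<inter> \<Delta> \<noteq> {}"
| "inst RBot (\<Gamma>, \<Delta>) Ps \<longleftrightarrow> Ps = [] \<and> FBot \<in> \<Gamma>"
| "inst (RImpL \<phi> \<psi>) C Ps \<longleftrightarrow> (\<exists>\<Gamma> \<Delta>. C = (insert (Imp \<phi> \<psi>) \<Gamma>, \<Delta>) \<and>
       Ps = [(\<Gamma>, insert \<phi> \<Delta>), (insert \<psi> \<Gamma>, \<Delta>)])"
| "inst (RImpR \<phi> \<psi>) C Ps \<longleftrightarrow> (\<exists>\<Gamma> \<Delta>. C = (\<Gamma>, insert (Imp \<phi> \<psi>) \<Delta>) \<and>
       Ps = [(insert \<phi> \<Gamma>, insert \<psi> \<Delta>)])"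
| "inst RWk (\<Gamma>', \<Delta>') Ps \<longleftrightarrow> (\<exists>\<Gamma> \<Delta>. \<Gamma> \<subseteq> \<Gamma>' \<and> \<Delta> \<subseteq> \<Delta>' \<and> Ps = [(\<Gamma>, \<Delta>)])"
| "inst (RCut \<phi>) (\<Gamma>, \<Delta>) Ps \<longleftrightarrow> Ps = [(\<Gamma>, insert \<phi> \<Delta>), (insert \<phi> \<Gamma>, \<Delta>)]"
| "inst (RK \<pi> \<phi>) C Ps \<longleftrightarrow> (\<exists>\<Gamma> \<Gamma>' \<Delta>. C = (\<Gamma>' \<union> Box \<pi> ` \<Gamma>, insert (Box \<pi> \<phi>) \<Delta>) \<and>
       Ps = [(\<Gamma>, {\<phi>})])"
| "inst (RSeqL \<pi>0 \<pi>1 \<phi>) C Ps \<longleftrightarrow> (\<exists>\<Gamma> \<Delta>. C = (insert (Box (Seq \<pi>0 \<pi>1) \<phi>) \<Gamma>, \<Delta>) \<and>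
       Ps = [(insert (Box \<pi>0 (Box \<pi>1 \<phi>)) \<Gamma>, \<Delta>)])"
| "inst (RSeqR \<pi>0 \<pi>1 \<phi>) C Ps \<longleftrightarrow> (\<exists>\<Gamma> \<Delta>. C = (\<Gamma>, insert (Box (Seq \<pi>0 \<pi>1) \<phi>) \<Delta>) \<and>
       Ps = [(\<Gamma>, insert (Box \<pi>0 (Box \<pi>1 \<phi>)) \<Delta>)])"
| "inst (RCupL \<pi>0 \<pi>1 \<phi>) C Ps \<longleftrightarrow> (\<exists>\<Gamma> \<Delta>. C = (insert (Box (Cup \<pi>0 \<pi>1) \<phi>) \<Gamma>, \<Delta>) \<and>
       Ps = [(insert (Box \<pi>0 \<phi>) (insert (Box \<pi>1 \<phi>) \<Gamma>), \<Delta>)])"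
| "inst (RCupR \<pi>0 \<pi>1 \<phi>) C Ps \<longleftrightarrow> (\<exists>\<Gamma> \<Delta>. C = (\<Gamma>, insert (Box (Cup \<pi>0 \<pi>1) \<phi>) \<Delta>) \<and>
       Ps = [(\<Gamma>, insert (Box \<pi>0 \<phi>) \<Delta>), (\<Gamma>, insert (Box \<pi>1 \<phi>) \<Delta>)])"
| "inst (RStarL \<pi> \<phi>) C Ps \<longleftrightarrow> (\<exists>\<Gamma> \<Delta>. C = (insert (Box (Star \<pi>) \<phi>) \<Gamma>, \<Delta>) \<and>
       Ps = [(insert \<phi> (insert (Box \<pi> (Box (Star \<pi>) \<phi>)) \<Gamma>), \<Delta>)])"
| "inst (RTestL \<phi> \<psi>) C Ps \<longleftrightarrow> (\<exists>\<Gamma> \<Delta>. C = (insert (Box (Test \<phi>) \<psi>) \<Gamma>, \<Delta>) \<and>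
       Ps = [(\<Gamma>, insert \<phi> \<Delta>), (insert \<psi> \<Gamma>, \<Delta>)])"
| "inst (RTestR \<phi> \<psi>) C Ps \<longleftrightarrow> (\<exists>\<Gamma> \<Delta>. C = (\<Gamma>, insert (Box (Test \<phi>) \<psi>) \<Delta>) \<and>
       Ps = [(insert \<phi> \<Gamma>, insert \<psi> \<Delta>)])"
| "inst (RCs \<pi> \<phi>) C Ps \<longleftrightarrow> (\<exists>\<Gamma> \<Delta>. C = (\<Gamma>, insert (Box (Star \<pi>) \<phi>) \<Delta>) \<and>
       Ps = [(\<Gamma>, insert \<phi> \<Delta>), (\<Gamma>, insert (Box \<pi> (Box (Star \<pi>) \<phi>)) \<Delta>)])"

text \<open>Trace steps: tr r j \<tau> \<tau>' says that \<tau>' (in premise number j) may follow \<tau> (in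
  the conclusion) along a trace through an instance of r.\<close>
fun tr :: "('a, 'p) rule \<Rightarrow> nat \<Rightarrow> ('a, 'p) fm \<Rightarrow> ('a, 'p) fm \<Rightarrow> bool" where
  "tr (RImpR \<phi> \<psi>) j \<tau> \<tau>' \<longleftrightarrow> \<tau>' = \<tau> \<or> (\<tau> = Imp \<phi> \<psi> \<and> \<tau>' = \<psi>)"
| "tr (RSeqR \<pi>0 \<pi>1 \<phi>) j \<tau> \<tau>' \<longleftrightarrow> \<tau>' = \<tau> \<or>
     (\<tau> = Box (Seq \<pi>0 \<pi>1) \<phi> \<and> \<tau>' = Box \<pi>0 (Box \<pi>1 \<phi>))"
| "tr (RCupR \<pi>0 \<pi>1 \<phi>) j \<tau> \<tau>' \<longleftrightarrow> \<tau>' = \<tau> \<or>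
     (\<tau> = Box (Cup \<pi>0 \<pi>1) \<phi> \<and> \<tau>' = Box (if j = 0 then \<pi>0 else \<pi>1) \<phi>)"
| "tr (RTestR \<phi> \<psi>) j \<tau> \<tau>' \<longleftrightarrow> \<tau>' = \<tau> \<or> (\<tau> = Box (Test \<phi>) \<psi> \<and> \<tau>' = \<psi>)"
| "tr (RCs \<pi> \<phi>) j \<tau> \<tau>' \<longleftrightarrow> \<tau>' = \<tau> \<or>
     (\<tau> = Box (Star \<pi>) \<phi> \<and> \<tau>' = (if j = 0 then \<phi> else Box \<pi> (Box (Star \<pi>) \<phi>)))"
| "tr (RK \<pi> \<phi>) j \<tau> \<tau>' \<longleftrightarrow> \<tau> = Box \<pi> \<phi> \<and> \<tau>' = \<phi>"
| "tr _ j \<tau> \<tau>' \<longleftrightarrow> \<tau>' = \<tau>"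

fun progress :: "('a, 'p) rule \<Rightarrow> nat \<Rightarrow> ('a, 'p) fm \<Rightarrow> ('a, 'p) fm \<Rightarrow> bool" where
  "progress (RCs \<pi> \<phi>) j \<tau> \<tau>' \<longleftrightarrow>
     j = 1 \<and> \<tau> = Box (Star \<pi>) \<phi> \<and> \<tau>' = Box \<pi> (Box (Star \<pi>) \<phi>)"
| "progress _ j \<tau> \<tau>' \<longleftrightarrow> False"

text \<open>A pre-proof: finite tree with node set N, root r, labels lab, ordered children kids
  (the premises of the rule instance rl n at n), and a companion assignment bud for the buds.\<close>
definition pre_proof ::
  "nat set \<Rightarrow> nat \<Rightarrow> (nat \<Rightarrow> ('a, 'p) sequent) \<Rightarrow> (nat \<Rightarrow> nat list) \<Rightarrow>
   (nat \<Rightarrow> nat option) \<Rightarrow> (nat \<Rightarrow> ('a, 'p) rule) \<Rightarrow> bool" where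
  "pre_proof N r lab kids bud rl \<longleftrightarrow>
     finite N \<and> r \<in> N \<and>
     (\<forall>n \<in> N. finite (fst (lab n)) \<and> finite (snd (lab n))) \<and>
     (\<forall>n \<in> N. set (kids n) \<subseteq> N \<and> distinct (kids n)) \<and>
     (\<forall>n \<in> N. r \<notin> set (kids n)) \<and>
     (\<forall>m \<in> N - {r}. \<exists>!n. n \<in> N \<and> m \<in> set (kids n)) \<and>
     (\<forall>m \<in> N. (r, m) \<in> {(n, k). n \<in> N \<and> k \<in> set (kids n)}\<^sup>*) \<and>
     (\<forall>n \<in> N. case bud n of
        Some c \<Rightarrow> kids n = [] \<and> c \<in> N \<and> kids c \<noteq> [] \<and> lab c = lab n
      | None \<Rightarrow> inst (rl n) (lab n) (map lab (kids n)))"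

text \<open>In the derivation graph every bud is identified with its companion.\<close>
definition target :: "(nat \<Rightarrow> nat option) \<Rightarrow> nat \<Rightarrow> nat" where
  "target bud m = (case bud m of Some c \<Rightarrow> c | None \<Rightarrow> m)"

text \<open>An infinite path p through the derivation graph, j i being the index of the premise
  taken at step i.\<close>
definition inf_path ::
  "nat set \<Rightarrow> (nat \<Rightarrow> nat list) \<Rightarrow> (nat \<Rightarrow> nat option) \<Rightarrow> (nat \<Rightarrow> nat) \<Rightarrow> (nat \<Rightarrow> nat) \<Rightarrow> bool" where
  "inf_path N kids bud p j \<longleftrightarrow>
     (\<forall>i. p i \<in> N \<and> bud (p i) = None \<and> j i < length (kids (p i)) \<and>
          p (Suc i) = target bud (kids (p i) ! j i))"

definition cgpdl_proof ::
  "nat set \<Rightarrow> nat \<Rightarrow> (nat \<Rightarrow> ('a, 'p) sequent) \<Rightarrow> (nat \<Rightarrow> nat list) \<Rightarrow>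
   (nat \<Rightarrow> nat option) \<Rightarrow> (nat \<Rightarrow> ('a, 'p) rule) \<Rightarrow> bool" where
  "cgpdl_proof N r lab kids bud rl \<longleftrightarrow>
     pre_proof N r lab kids bud rl \<and>
     (\<forall>p j. inf_path N kids bud p j \<longrightarrow>
        (\<exists>k \<tau>. (\<forall>i \<ge> k. \<tau> i \<in> snd (lab (p i)) \<and> tr (rl (p i)) (j i) (\<tau> i) (\<tau> (Suc i))) \<and>
               (\<exists>\<^sub>\<infinity>i. k \<le> i \<and> progress (rl (p i)) (j i) (\<tau> i) (\<tau> (Suc i)))))"

definition provable :: "('a, 'p) fm set \<Rightarrow> ('a, 'p) fm set \<Rightarrow> bool" where
  "provable \<Gamma> \<Delta> \<longleftrightarrow>
     (\<exists>N r lab kids bud rl. cgpdl_proof N r lab kids bud rl \<and> lab r = (\<Gamma>, \<Delta>))"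

end

theory Submission
  imports Defs
begin

(* If a world w falsifies the conclusion of a rule instance, some premise is falsified as well:
   at w itself, except for (K), where one moves to an R_\<pi>-successor of w. Starting from a
   world falsifying the root, this gives an infinite path through the derivation graph labelled
   by falsified sequents. A false formula has a cost: the least number of loop iterations, in
   total, of the runs in a witness of its falsity. Following a trace, the cost never increases,
   and it strictly decreases at every progress point, because (C-s) is followed into its second
   premise only when the cheapest witness for [\<pi>*]\<phi> iterates \<pi> at least once. A trace with
   infinitely many progress points would therefore yield an infinitely descending sequence of
   natural numbers. *)

lemma rel_subset_Wd: "is_model M \<Longrightarrow> rel M \<pi> \<subseteq> Wd M \<times> Wd M"
proof (induction \<pi>)
  case (Star \<pi>)
  then have "(rel M \<pi>)\<^sup>+ \<subseteq> Wd M \<times> Wd M" by (intro trancl_subset_Sigma) auto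
  then show ?case by (auto simp: Id_on_def)
qed (auto simp: is_model_def)

inductive run :: "('w, 'a, 'p) model \<Rightarrow> ('a, 'p) prg \<Rightarrow> 'w \<Rightarrow> 'w \<Rightarrow> nat \<Rightarrow> bool" for M where
  run_At: "(w, v) \<in> Rl M \<alpha> \<Longrightarrow> run M (At \<alpha>) w v 0"
| run_Seq: "run M \<pi>0 w v i \<Longrightarrow> run M \<pi>1 v u j \<Longrightarrow> run M (Seq \<pi>0 \<pi>1) w u (i + j)"
| run_Cup0: "run M \<pi>0 w v i \<Longrightarrow> run M (Cup \<pi>0 \<pi>1) w v i"
| run_Cup1: "run M \<pi>1 w v i \<Longrightarrow> run M (Cup \<pi>0 \<pi>1) w v i"
| run_Test: "w \<in> Wd M \<Longrightarrow> sat M w \<phi> \<Longrightarrow> run M (Test \<phi>) w w 0"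
| run_Star_refl: "w \<in> Wd M \<Longrightarrow> run M (Star \<pi>) w w 0"
| run_Star_step: "run M \<pi> w v i \<Longrightarrow> run M (Star \<pi>) v u j \<Longrightarrow> run M (Star \<pi>) w u (Suc (i + j))"

inductive_cases run_SeqE: "run M (Seq \<pi>0 \<pi>1) w u k"
inductive_cases run_CupE: "run M (Cup \<pi>0 \<pi>1) w u k"
inductive_cases run_TestE: "run M (Test \<phi>) w u k"
inductive_cases run_StarE: "run M (Star \<pi>) w u k"

lemma run_imp_rel: "run M \<pi> w v k \<Longrightarrow> (w, v) \<in> rel M \<pi>"
proof (induction rule: run.induct)
  case (run_Star_step \<pi> w v i u j)
  then have "(w, u) \<in> (rel M \<pi>)\<^sup>+" by (auto simp: Id_on_def trancl_into_trancl2)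
  then show ?case by simp
qed auto

lemma rel_imp_run:
  assumes M: "is_model M"
  shows "(w, v) \<in> rel M \<pi> \<Longrightarrow> \<exists>k. run M \<pi> w v k"
proof (induction \<pi> arbitrary: w v rule: prg.induct[where ?P1.0 = "\<lambda>_. True"])
  case (Seq \<pi>0 \<pi>1)
  then obtain u where "(w, u) \<in> rel M \<pi>0" "(u, v) \<in> rel M \<pi>1" by auto
  with Seq.IH show ?case by (meson run_Seq)
next
  case (Cup \<pi>0 \<pi>1)
  then have "(w, v) \<in> rel M \<pi>0 \<or> (w, v) \<in> rel M \<pi>1" by simp
  with Cup.IH show ?case by (meson run_Cup0 run_Cup1)
next
  case (Star \<pi>)
  from \<open>(w, v) \<in> rel M (Star \<pi>)\<close> consider "w = v" "w \<in> Wd M" | "(w, v) \<in> (rel M \<pi>)\<^sup>+"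
    by (auto simp: Id_on_def)
  then show ?case
  proof cases
    case 2
    then show ?thesis
    proof (induction rule: converse_trancl_induct)
      case (base y)
      with rel_subset_Wd[OF M] have "v \<in> Wd M" by auto
      with base Star.IH show ?case by (meson run_Star_refl run_Star_step)
    next
      case (step y z)
      with Star.IH show ?case by (meson run_Star_step)
    qed
  qed (blast intro: run_Star_refl)
qed (auto intro: run.intros)

inductive refutes :: "('w, 'a, 'p) model \<Rightarrow> 'w \<Rightarrow> ('a, 'p) fm \<Rightarrow> nat \<Rightarrow> bool" for M where
  refutes_FBot: "refutes M w FBot 0"
| refutes_Atom: "p \<notin> Vl M w \<Longrightarrow> refutes M w (Atom p) 0"
| refutes_Imp: "sat M w \<phi> \<Longrightarrow> refutes M w \<psi> n \<Longrightarrow> refutes M w (Imp \<phi> \<psi>) n"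
| refutes_Box: "run M \<pi> w v k \<Longrightarrow> refutes M v \<phi> n \<Longrightarrow> refutes M w (Box \<pi> \<phi>) (k + n)"

inductive_cases refutes_AtomE: "refutes M w (Atom p) n"
inductive_cases refutes_ImpE: "refutes M w (Imp \<phi> \<psi>) n"
inductive_cases refutes_BoxE: "refutes M w (Box \<pi> \<phi>) n"

lemma not_sat_iff_refutes:
  assumes "is_model M"
  shows "\<not> sat M w \<phi> \<longleftrightarrow> (\<exists>n. refutes M w \<phi> n)"
proof (induction \<phi> arbitrary: w rule: fm.induct[where ?P2.0 = "\<lambda>_. True"])
  case (Box \<pi> \<phi>)
  show ?case
  proof
    assume "\<not> sat M w (Box \<pi> \<phi>)"
    then obtain v where "(w, v) \<in> rel M \<pi>" "\<not> sat M v \<phi>" by auto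
    with Box.IH rel_imp_run[OF assms] show "\<exists>n. refutes M w (Box \<pi> \<phi>) n"
      by (meson refutes_Box)
  next
    assume "\<exists>n. refutes M w (Box \<pi> \<phi>) n"
    then obtain v k n where "run M \<pi> w v k" "refutes M v \<phi> n" by (auto elim: refutes_BoxE)
    with Box.IH show "\<not> sat M w (Box \<pi> \<phi>)" by (auto dest: run_imp_rel)
  qed
qed (auto intro: refutes.intros elim: refutes_AtomE refutes_ImpE)

(* Only meaningful for false formulas: for a true one, LEAST ranges over the empty set. *)
definition cost :: "('w, 'a, 'p) model \<Rightarrow> 'w \<Rightarrow> ('a, 'p) fm \<Rightarrow> nat" where
  "cost M w \<phi> = (LEAST n. refutes M w \<phi> n)"

lemma cost_le: "refutes M w \<phi> n \<Longrightarrow> cost M w \<phi> \<le> n"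
  unfolding cost_def by (rule Least_le)

lemma refutes_cost: "is_model M \<Longrightarrow> \<not> sat M w \<phi> \<Longrightarrow> refutes M w \<phi> (cost M w \<phi>)"
  unfolding cost_def by (metis LeastI not_sat_iff_refutes)

lemma refutes_ImpD: "refutes M w (Imp \<phi> \<psi>) n \<Longrightarrow> refutes M w \<psi> n"
  by (auto elim: refutes_ImpE)

lemma refutes_BoxD:
  "refutes M w (Box \<pi> \<phi>) n \<Longrightarrow> \<exists>v m. (w, v) \<in> rel M \<pi> \<and> refutes M v \<phi> m \<and> m \<le> n"
  by (metis refutes_BoxE run_imp_rel le_add2)

lemma refutes_Box_SeqD:
  assumes "refutes M w (Box (Seq \<pi>0 \<pi>1) \<phi>) n"
  shows "refutes M w (Box \<pi>0 (Box \<pi>1 \<phi>)) n"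
proof -
  from assms obtain u v i j m where
    "run M \<pi>0 w v i" "run M \<pi>1 v u j" "refutes M u \<phi> m" "n = i + (j + m)"
    by (auto elim!: refutes_BoxE run_SeqE)
  then show ?thesis by (metis refutes_Box)
qed

lemma refutes_Box_CupD:
  "refutes M w (Box (Cup \<pi>0 \<pi>1) \<phi>) n \<Longrightarrow> refutes M w (Box \<pi>0 \<phi>) n \<or> refutes M w (Box \<pi>1 \<phi>) n"
  by (auto elim!: refutes_BoxE run_CupE intro: refutes_Box)

lemma refutes_Box_TestD: "refutes M w (Box (Test \<phi>) \<psi>) n \<Longrightarrow> refutes M w \<psi> n"
  by (auto elim!: refutes_BoxE run_TestE)

lemma refutes_Box_StarD:
  assumes "refutes M w (Box (Star \<pi>) \<phi>) n"
  shows "refutes M w \<phi> n \<or> (\<exists>m < n. refutes M w (Box \<pi> (Box (Star \<pi>) \<phi>)) m)"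
proof -
  from assms obtain u k m where u: "run M (Star \<pi>) w u k" "refutes M u \<phi> m" "n = k + m"
    by (auto elim: refutes_BoxE)
  from u(1) consider "u = w" "k = 0"
    | v i j where "run M \<pi> w v i" "run M (Star \<pi>) v u j" "k = Suc (i + j)"
    by (auto elim: run_StarE)
  then show ?thesis
  proof cases
    case (2 v i j)
    then have "refutes M w (Box \<pi> (Box (Star \<pi>) \<phi>)) (i + (j + m))"
      using u(2) by (blast intro: refutes_Box)
    with 2 u(3) show ?thesis by auto
  qed (use u in auto)
qed

lemma sat_Box_Star_unfold:
  assumes "w \<in> Wd M" "sat M w (Box (Star \<pi>) \<phi>)"
  shows "sat M w \<phi> \<and> sat M w (Box \<pi> (Box (Star \<pi>) \<phi>))"
proof -
  have "(w, u) \<in> rel M (Star \<pi>)" if "(w, v) \<in> rel M \<pi>" "(v, u) \<in> rel M (Star \<pi>)" for v u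
    using that by (auto simp: Id_on_def trancl_into_trancl2)
  with assms show ?thesis by auto
qed

definition falsifies :: "('w, 'a, 'p) model \<Rightarrow> 'w \<Rightarrow> ('a, 'p) sequent \<Rightarrow> bool" where
  "falsifies M w S \<longleftrightarrow> w \<in> Wd M \<and> (\<forall>\<phi> \<in> fst S. sat M w \<phi>) \<and> (\<forall>\<psi> \<in> snd S. \<not> sat M w \<psi>)"

definition traces_descend ::
  "('w, 'a, 'p) model \<Rightarrow> ('a, 'p) rule \<Rightarrow> nat \<Rightarrow> 'w \<Rightarrow> ('a, 'p) fm set \<Rightarrow> 'w \<Rightarrow> ('a, 'p) fm set \<Rightarrow> bool"
where
  "traces_descend M r j w \<Delta> w' \<Delta>' \<longleftrightarrow>
     (\<forall>\<tau> \<in> \<Delta>. \<forall>\<tau>' \<in> \<Delta>'. \<not> sat M w \<tau> \<longrightarrow> tr r j \<tau> \<tau>' \<longrightarrow>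
        cost M w' \<tau>' \<le> cost M w \<tau> \<and> (progress r j \<tau> \<tau>' \<longrightarrow> cost M w' \<tau>' < cost M w \<tau>))"

lemma progress_irrefl: "\<not> progress r j \<tau> \<tau>"
  by (cases r) auto

fun right_principal :: "('a, 'p) rule \<Rightarrow> bool" where
  "right_principal (RImpR _ _) \<longleftrightarrow> True"
| "right_principal (RSeqR _ _ _) \<longleftrightarrow> True"
| "right_principal (RCupR _ _ _) \<longleftrightarrow> True"
| "right_principal (RTestR _ _) \<longleftrightarrow> True"
| "right_principal (RCs _ _) \<longleftrightarrow> True"
| "right_principal (RK _ _) \<longleftrightarrow> True"
| "right_principal _ \<longleftrightarrow> False"

lemma falsified_premise_left:
  assumes "inst r (\<Gamma>, \<Delta>) Ps" "falsifies M w (\<Gamma>, \<Delta>)" "\<not> right_principal r"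
  shows "\<exists>S \<in> set Ps. falsifies M w S"
proof (cases r)
  case (RSeqL \<pi>0 \<pi>1 \<phi>)
  with assms show ?thesis by (force simp: falsifies_def relcomp_unfold)
next
  case RWk
  with assms obtain \<Gamma>' \<Delta>' where "\<Gamma>' \<subseteq> \<Gamma>" "\<Delta>' \<subseteq> \<Delta>" "Ps = [(\<Gamma>', \<Delta>')]" by auto
  with assms(2) show ?thesis unfolding falsifies_def by auto
next
  case (RStarL \<pi> \<phi>)
  with assms show ?thesis by (auto simp: falsifies_def dest: sat_Box_Star_unfold)
qed (use assms in \<open>auto simp: falsifies_def\<close>)

lemma falsified_premise_principal:
  assumes M: "is_model M" and F: "falsifies M w (\<Gamma>, insert \<tau> \<Delta>)" and \<Gamma>': "\<forall>\<phi> \<in> \<Gamma>'. sat M w \<phi>"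
    and tr: "\<And>\<sigma> \<sigma>'. tr r j \<sigma> \<sigma>' \<Longrightarrow> \<sigma>' = \<sigma> \<or> \<sigma> = \<tau> \<and> \<sigma>' = \<tau>'"
    and ref: "refutes M w \<tau>' m" and le: "m \<le> cost M w \<tau>"
    and lt: "progress r j \<tau> \<tau>' \<Longrightarrow> m < cost M w \<tau>"
  shows "falsifies M w (\<Gamma>', insert \<tau>' \<Delta>) \<and> traces_descend M r j w (insert \<tau> \<Delta>) w (insert \<tau>' \<Delta>)"
proof
  have "\<not> sat M w \<tau>'" using ref not_sat_iff_refutes[OF M] by blast
  with F \<Gamma>' show "falsifies M w (\<Gamma>', insert \<tau>' \<Delta>)" by (simp add: falsifies_def)
next
  have "cost M w \<tau>' \<le> m" using ref by (rule cost_le)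
  then show "traces_descend M r j w (insert \<tau> \<Delta>) w (insert \<tau>' \<Delta>)"
    unfolding traces_descend_def using tr le lt progress_irrefl by fastforce
qed

lemma falsified_premise_K:
  assumes M: "is_model M" and F: "falsifies M w (\<Gamma>' \<union> Box \<pi> ` \<Gamma>, insert (Box \<pi> \<phi>) \<Delta>)"
  shows "\<exists>v. falsifies M v (\<Gamma>, {\<phi>}) \<and> traces_descend M (RK \<pi> \<phi>) 0 w (insert (Box \<pi> \<phi>) \<Delta>) v {\<phi>}"
proof -
  from F have "\<not> sat M w (Box \<pi> \<phi>)" by (simp add: falsifies_def)
  from refutes_BoxD[OF refutes_cost[OF M this]] obtain v m
    where v: "(w, v) \<in> rel M \<pi>" "refutes M v \<phi> m" "m \<le> cost M w (Box \<pi> \<phi>)"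
    by blast
  have "sat M v \<psi>" if "\<psi> \<in> \<Gamma>" for \<psi>
  proof -
    from F that have "sat M w (Box \<pi> \<psi>)" unfolding falsifies_def by (metis UnCI fst_conv imageI)
    with v(1) show ?thesis by simp
  qed
  moreover have "v \<in> Wd M" using v(1) rel_subset_Wd[OF M] by blast
  moreover have "\<not> sat M v \<phi>" using v(2) not_sat_iff_refutes[OF M] by blast
  ultimately have "falsifies M v (\<Gamma>, {\<phi>})" by (simp add: falsifies_def)
  moreover have "traces_descend M (RK \<pi> \<phi>) 0 w (insert (Box \<pi> \<phi>) \<Delta>) v {\<phi>}"
    using cost_le[OF v(2)] v(3) by (simp add: traces_descend_def)
  ultimately show ?thesis by blast
qed

lemma falsified_premise_ImpR:
  assumes M: "is_model M" and F: "falsifies M w (\<Gamma>, insert (Imp \<phi> \<psi>) \<Delta>)"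
  shows "falsifies M w (insert \<phi> \<Gamma>, insert \<psi> \<Delta>) \<and>
    traces_descend M (RImpR \<phi> \<psi>) 0 w (insert (Imp \<phi> \<psi>) \<Delta>) w (insert \<psi> \<Delta>)"
proof -
  from F have ns: "\<not> sat M w (Imp \<phi> \<psi>)" by (simp add: falsifies_def)
  from refutes_ImpD[OF refutes_cost[OF M ns]] show ?thesis
    using F ns by (intro falsified_premise_principal[OF M F]) (auto simp: falsifies_def)
qed

lemma falsified_premise_SeqR:
  assumes M: "is_model M" and F: "falsifies M w (\<Gamma>, insert (Box (Seq \<pi>0 \<pi>1) \<phi>) \<Delta>)"
  shows "falsifies M w (\<Gamma>, insert (Box \<pi>0 (Box \<pi>1 \<phi>)) \<Delta>) \<and>
    traces_descend M (RSeqR \<pi>0 \<pi>1 \<phi>) 0 w (insert (Box (Seq \<pi>0 \<pi>1) \<phi>) \<Delta>)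
      w (insert (Box \<pi>0 (Box \<pi>1 \<phi>)) \<Delta>)"
proof -
  from F have ns: "\<not> sat M w (Box (Seq \<pi>0 \<pi>1) \<phi>)" by (simp add: falsifies_def)
  from refutes_Box_SeqD[OF refutes_cost[OF M ns]] show ?thesis
    using F by (intro falsified_premise_principal[OF M F]) (auto simp: falsifies_def)
qed

lemma falsified_premise_TestR:
  assumes M: "is_model M" and F: "falsifies M w (\<Gamma>, insert (Box (Test \<phi>) \<psi>) \<Delta>)"
  shows "falsifies M w (insert \<phi> \<Gamma>, insert \<psi> \<Delta>) \<and>
    traces_descend M (RTestR \<phi> \<psi>) 0 w (insert (Box (Test \<phi>) \<psi>) \<Delta>) w (insert \<psi> \<Delta>)"
proof -
  from F have ns: "\<not> sat M w (Box (Test \<phi>) \<psi>)" by (simp add: falsifies_def)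
  from refutes_Box_TestD[OF refutes_cost[OF M ns]] show ?thesis
    using F ns by (intro falsified_premise_principal[OF M F]) (auto simp: falsifies_def)
qed

lemma falsified_premise_CupR:
  assumes M: "is_model M" and F: "falsifies M w (\<Gamma>, insert (Box (Cup \<pi>0 \<pi>1) \<phi>) \<Delta>)"
  shows "falsifies M w (\<Gamma>, insert (Box \<pi>0 \<phi>) \<Delta>) \<and>
      traces_descend M (RCupR \<pi>0 \<pi>1 \<phi>) 0 w (insert (Box (Cup \<pi>0 \<pi>1) \<phi>) \<Delta>) w (insert (Box \<pi>0 \<phi>) \<Delta>)
    \<or> falsifies M w (\<Gamma>, insert (Box \<pi>1 \<phi>) \<Delta>) \<and>
      traces_descend M (RCupR \<pi>0 \<pi>1 \<phi>) 1 w (insert (Box (Cup \<pi>0 \<pi>1) \<phi>) \<Delta>) w (insert (Box \<pi>1 \<phi>) \<Delta>)"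
proof -
  from F have ns: "\<not> sat M w (Box (Cup \<pi>0 \<pi>1) \<phi>)" by (simp add: falsifies_def)
  from refutes_Box_CupD[OF refutes_cost[OF M ns]] show ?thesis
  proof
    assume ref: "refutes M w (Box \<pi>0 \<phi>) (cost M w (Box (Cup \<pi>0 \<pi>1) \<phi>))"
    show ?thesis
      by (rule disjI1, rule falsified_premise_principal[OF M F _ _ ref])
        (use F in \<open>auto simp: falsifies_def\<close>)
  next
    assume ref: "refutes M w (Box \<pi>1 \<phi>) (cost M w (Box (Cup \<pi>0 \<pi>1) \<phi>))"
    show ?thesis
      by (rule disjI2, rule falsified_premise_principal[OF M F _ _ ref])
        (use F in \<open>auto simp: falsifies_def\<close>)
  qed
qed

lemma falsified_premise_Cs:
  assumes M: "is_model M" and F: "falsifies M w (\<Gamma>, insert (Box (Star \<pi>) \<phi>) \<Delta>)"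
  shows "falsifies M w (\<Gamma>, insert \<phi> \<Delta>) \<and>
      traces_descend M (RCs \<pi> \<phi>) 0 w (insert (Box (Star \<pi>) \<phi>) \<Delta>) w (insert \<phi> \<Delta>)
    \<or> falsifies M w (\<Gamma>, insert (Box \<pi> (Box (Star \<pi>) \<phi>)) \<Delta>) \<and>
      traces_descend M (RCs \<pi> \<phi>) 1 w (insert (Box (Star \<pi>) \<phi>) \<Delta>)
        w (insert (Box \<pi> (Box (Star \<pi>) \<phi>)) \<Delta>)"
proof -
  from F have ns: "\<not> sat M w (Box (Star \<pi>) \<phi>)" by (simp add: falsifies_def)
  from refutes_Box_StarD[OF refutes_cost[OF M ns]] show ?thesis
  proof
    assume ref: "refutes M w \<phi> (cost M w (Box (Star \<pi>) \<phi>))"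
    show ?thesis
      by (rule disjI1, rule falsified_premise_principal[OF M F _ _ ref])
        (use F in \<open>auto simp: falsifies_def\<close>)
  next
    assume "\<exists>m < cost M w (Box (Star \<pi>) \<phi>). refutes M w (Box \<pi> (Box (Star \<pi>) \<phi>)) m"
    then obtain m where lt: "m < cost M w (Box (Star \<pi>) \<phi>)"
      and ref: "refutes M w (Box \<pi> (Box (Star \<pi>) \<phi>)) m"
      by blast
    show ?thesis
      by (rule disjI2, rule falsified_premise_principal[OF M F _ _ ref])
        (use F lt in \<open>auto simp: falsifies_def\<close>)
  qed
qed

lemma falsified_premise:
  assumes M: "is_model M" and I: "inst r (\<Gamma>, \<Delta>) Ps" and F: "falsifies M w (\<Gamma>, \<Delta>)"
  shows "\<exists>j w'. j < length Ps \<and> falsifies M w' (Ps ! j) \<and>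
    traces_descend M r j w \<Delta> w' (snd (Ps ! j))"
proof (cases "right_principal r")
  case False
  from falsified_premise_left[OF I F False] obtain j where "j < length Ps" "falsifies M w (Ps ! j)"
    by (auto simp: in_set_conv_nth)
  moreover have "traces_descend M r j w \<Delta> w \<Delta>'" for \<Delta>'
    using False progress_irrefl by (cases r) (auto simp: traces_descend_def)
  ultimately show ?thesis by blast
next
  case True
  note index_simps = less_Suc_eq conj_disj_distribR ex_disj_distrib
  from True show ?thesis
  proof (cases r)
    case (RImpR \<phi> \<psi>)
    with I obtain \<Delta>0 where "\<Delta> = insert (Imp \<phi> \<psi>) \<Delta>0" "Ps = [(insert \<phi> \<Gamma>, insert \<psi> \<Delta>0)]" by auto
    with F RImpR show ?thesis by (auto simp: index_simps dest!: falsified_premise_ImpR[OF M])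
  next
    case (RSeqR \<pi>0 \<pi>1 \<phi>)
    with I obtain \<Delta>0 where "\<Delta> = insert (Box (Seq \<pi>0 \<pi>1) \<phi>) \<Delta>0"
      "Ps = [(\<Gamma>, insert (Box \<pi>0 (Box \<pi>1 \<phi>)) \<Delta>0)]" by auto
    with F RSeqR show ?thesis by (auto simp: index_simps dest!: falsified_premise_SeqR[OF M])
  next
    case (RCupR \<pi>0 \<pi>1 \<phi>)
    with I obtain \<Delta>0 where "\<Delta> = insert (Box (Cup \<pi>0 \<pi>1) \<phi>) \<Delta>0"
      "Ps = [(\<Gamma>, insert (Box \<pi>0 \<phi>) \<Delta>0), (\<Gamma>, insert (Box \<pi>1 \<phi>) \<Delta>0)]" by auto
    with F RCupR show ?thesis by (auto simp: index_simps dest!: falsified_premise_CupR[OF M])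
  next
    case (RTestR \<phi> \<psi>)
    with I obtain \<Delta>0 where "\<Delta> = insert (Box (Test \<phi>) \<psi>) \<Delta>0"
      "Ps = [(insert \<phi> \<Gamma>, insert \<psi> \<Delta>0)]" by auto
    with F RTestR show ?thesis by (auto simp: index_simps dest!: falsified_premise_TestR[OF M])
  next
    case (RCs \<pi> \<phi>)
    with I obtain \<Delta>0 where "\<Delta> = insert (Box (Star \<pi>) \<phi>) \<Delta>0"
      "Ps = [(\<Gamma>, insert \<phi> \<Delta>0), (\<Gamma>, insert (Box \<pi> (Box (Star \<pi>) \<phi>)) \<Delta>0)]" by auto
    with F RCs show ?thesis by (auto simp: index_simps dest!: falsified_premise_Cs[OF M])
  next
    case (RK \<pi> \<phi>)
    with I obtain \<Gamma>0 \<Gamma>1 \<Delta>0 where "\<Gamma> = \<Gamma>1 \<union> Box \<pi> ` \<Gamma>0" "\<Delta> = insert (Box \<pi> \<phi>) \<Delta>0"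
      "Ps = [(\<Gamma>0, {\<phi>})]" by auto
    with F RK show ?thesis by (auto simp: index_simps dest!: falsified_premise_K[OF M])
  qed simp_all
qed

lemma pre_proof_node:
  assumes "pre_proof N r lab kids bud rl" "n \<in> N"
  shows "set (kids n) \<subseteq> N"
    and "case bud n of Some c \<Rightarrow> kids n = [] \<and> c \<in> N \<and> kids c \<noteq> [] \<and> lab c = lab n
      | None \<Rightarrow> inst (rl n) (lab n) (map lab (kids n))"
  using assms unfolding pre_proof_def by blast+

lemma pre_proof_target:
  assumes P: "pre_proof N r lab kids bud rl" and m: "m \<in> N"
  shows "target bud m \<in> N \<and> bud (target bud m) = None \<and> lab (target bud m) = lab m"
proof (cases "bud m")
  case (Some c)
  with pre_proof_node(2)[OF P m] have c: "c \<in> N" "kids c \<noteq> []" "lab c = lab m" by auto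
  with pre_proof_node(2)[OF P c(1)] have "bud c = None" by (auto split: option.splits)
  with c Some show ?thesis by (simp add: target_def)
qed (simp add: m target_def)

lemma falsified_infinite_path:
  fixes M :: "('w, 'a, 'p) model"
  assumes P: "pre_proof N r lab kids bud rl" and M: "is_model M" and F0: "falsifies M w0 (lab r)"
  shows "\<exists>p j ws. inf_path N kids bud p j \<and>
    (\<forall>i. falsifies M (ws i) (lab (p i)) \<and>
      traces_descend M (rl (p i)) (j i) (ws i) (snd (lab (p i)))
        (ws (Suc i)) (snd (lab (p (Suc i)))))"
proof -
  define good where "good x \<longleftrightarrow> fst x \<in> N \<and> bud (fst x) = None \<and> falsifies M (snd x) (lab (fst x))"
    for x :: "nat \<times> 'w"
  define step where "step x j y \<longleftrightarrow>
      j < length (kids (fst x)) \<and> fst y = target bud (kids (fst x) ! j) \<and>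
      traces_descend M (rl (fst x)) j (snd x) (snd (lab (fst x))) (snd y) (snd (lab (fst y)))"
    for x y :: "nat \<times> 'w" and j
  have "\<exists>y. good y \<and> (\<exists>j. step x j y)" if "good x" for x
  proof -
    obtain n w where x: "x = (n, w)" by fastforce
    with that have n: "n \<in> N" "bud n = None" and F: "falsifies M w (lab n)" by (auto simp: good_def)
    obtain \<Gamma> \<Delta> where L: "lab n = (\<Gamma>, \<Delta>)" by fastforce
    from n pre_proof_node(2)[OF P n(1)] have "inst (rl n) (\<Gamma>, \<Delta>) (map lab (kids n))"
      by (simp add: L)
    from falsified_premise[OF M this F[unfolded L]]
    obtain j w' where j: "j < length (kids n)" "falsifies M w' (lab (kids n ! j))"
      "traces_descend M (rl n) j w \<Delta> w' (snd (lab (kids n ! j)))" by auto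
    moreover have "kids n ! j \<in> N" using j(1) pre_proof_node(1)[OF P n(1)] by auto
    ultimately show ?thesis using pre_proof_target[OF P] x L
      by (intro exI[of _ "(target bud (kids n ! j), w')"]) (auto simp: good_def step_def)
  qed
  moreover have "good (target bud r, w0)"
    using pre_proof_target[OF P] P F0 by (simp add: good_def pre_proof_def)
  ultimately obtain f where f: "\<forall>i. good (f i) \<and> (\<exists>j. step (f i) j (f (Suc i)))"
    using dependent_nat_choice[of "\<lambda>_. good" "\<lambda>_ x y. \<exists>j. step x j y"] by blast

  then obtain j where J: "\<forall>i. step (f i) (j i) (f (Suc i))" by metis
  define p ws where "p = fst \<circ> f" and "ws = snd \<circ> f"
  have "inf_path N kids bud p j" using f J by (auto simp: inf_path_def good_def step_def p_def)
  moreover have "falsifies M (ws i) (lab (p i)) \<and>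
      traces_descend M (rl (p i)) (j i) (ws i) (snd (lab (p i)))
        (ws (Suc i)) (snd (lab (p (Suc i))))"
    for i using f J unfolding good_def step_def p_def ws_def comp_def by blast
  ultimately show ?thesis by blast
qed

lemma no_infinite_descent:
  fixes f :: "nat \<Rightarrow> nat"
  assumes mono: "\<And>i. k \<le> i \<Longrightarrow> f (Suc i) \<le> f i" and drops: "\<exists>\<^sub>\<infinity>i. f (Suc i) < f i"
  shows False
proof -
  have antimono: "f i' \<le> f i" if "k \<le> i" "i \<le> i'" for i i'
    using that(2)
  proof (induction rule: dec_induct)
    case (step m)
    with mono[of m] that(1) show ?case by simp
  qed simp
  have "\<exists>i \<ge> k. f i + n \<le> f k" for n
  proof (induction n)
    case (Suc n)
    then obtain i where i: "k \<le> i" "f i + n \<le> f k" by blast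
    from drops obtain i' where i': "i \<le> i'" "f (Suc i') < f i'" by (auto simp: INFM_nat_le)
    with i antimono[of i i'] have "f (Suc i') + Suc n \<le> f k" by linarith
    with i i' show ?case by (intro exI[of _ "Suc i'"]) auto
  qed auto
  from this[of "Suc (f k)"] show False by auto
qed

theorem mainTheorem10:
  fixes \<Gamma> \<Delta> :: "('a, 'p) fm set" and M :: "('w, 'a, 'p) model"
  assumes "finite \<Gamma>" and "finite \<Delta>"
    and "provable \<Gamma> \<Delta>"
    and "is_model M"
  shows "valid_in M \<Gamma> \<Delta>"
proof (rule ccontr)
  assume "\<not> valid_in M \<Gamma> \<Delta>"
  then obtain w0 where "falsifies M w0 (\<Gamma>, \<Delta>)" by (auto simp: valid_in_def falsifies_def)
  moreover from \<open>provable \<Gamma> \<Delta>\<close> obtain N r lab kids bud rl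
    where C: "cgpdl_proof N r lab kids bud rl" and "lab r = (\<Gamma>, \<Delta>)" by (auto simp: provable_def)
  moreover from C have "pre_proof N r lab kids bud rl" by (simp add: cgpdl_proof_def)
  ultimately obtain p j ws where path: "inf_path N kids bud p j"
    and F: "\<And>i. falsifies M (ws i) (lab (p i))"
    and D: "\<And>i. traces_descend M (rl (p i)) (j i) (ws i) (snd (lab (p i)))
      (ws (Suc i)) (snd (lab (p (Suc i))))"
    using falsified_infinite_path[OF _ \<open>is_model M\<close>] by metis
  from C path obtain k \<tau>
    where trace: "\<forall>i \<ge> k. \<tau> i \<in> snd (lab (p i)) \<and> tr (rl (p i)) (j i) (\<tau> i) (\<tau> (Suc i))"
      and progress: "\<exists>\<^sub>\<infinity>i. k \<le> i \<and> progress (rl (p i)) (j i) (\<tau> i) (\<tau> (Suc i))"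
    unfolding cgpdl_proof_def by blast
  define c where "c i = cost M (ws i) (\<tau> i)" for i
  have descent: "c (Suc i) \<le> c i \<and> (progress (rl (p i)) (j i) (\<tau> i) (\<tau> (Suc i)) \<longrightarrow> c (Suc i) < c i)"
    if "k \<le> i" for i
    using F[of i] D[of i] trace that unfolding falsifies_def traces_descend_def c_def by auto
  have "\<exists>\<^sub>\<infinity>i. c (Suc i) < c i" using progress by (rule INFM_mono) (use descent in blast)
  with descent show False by (intro no_infinite_descent[of k c]) auto
qed

end
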